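(* Let $G$ be a finite graph and let $k$ be an integer with $k>\chi(G)+1$. Then $G$ is determined up to isomorphism by the Kempe-recolouring graph $\mathcal{K}_k(G)$, even without knowing the value of $k$: if $G'$ is another finite graph and $k'>\chi(G')+1$ is an integer with $\mathcal{K}_k(G)\cong\mathcal{K}_{k'}(G')$, then $G\cong G'$.
   Context: All graphs are finite and simple. A $k$-colouring of $G$ is a map $c:V(G)\to\{1,\dots,k\}$ with $c(u)\neq c(v)$ for every edge $uv$. Given a $k$-colouring $c$, two distinct colours $i,j$, and a connected component $H$ of the subgraph of $G$ induced by $c^{-1}(\{i,j\})$, the Kempe swap on $H$ produces the colouring obtained from $c$ by exchanging colours $i$ and $j$ on the vertices of $H$. The $k$-Kempe-recolouring graph $\mathcal{K}_k(G)$ has as vertices all $k$-colourings of $G$, two distinct colourings being adjacent if and only if one is obtained from the other by a single Kempe swap. (Recolouring a single vertex to a colour absent from its neighbourhood is a special case, a trivial Kempe swap.) *)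

theory Defs
  imports Main
begin

definition simple_graph :: "'a set \<Rightarrow> ('a \<times> 'a) set \<Rightarrow> bool" where
  "simple_graph V E \<longleftrightarrow> finite V \<and> E \<subseteq> V \<times> V \<and> sym E \<and> (\<forall>v. (v, v) \<notin> E)"

definition graph_iso :: "'a set \<Rightarrow> ('a \<times> 'a) set \<Rightarrow> 'b set \<Rightarrow> ('b \<times> 'b) set \<Rightarrow> bool" where
  "graph_iso V E V' E' \<longleftrightarrow>
     (\<exists>f. bij_betw f V V' \<and> (\<forall>u\<in>V. \<forall>v\<in>V. (u, v) \<in> E \<longleftrightarrow> (f u, f v) \<in> E'))"

text \<open>k-colourings, colours 1..k; outside V the map is fixed to 0 so that
colourings are in bijection with maps V \<rightarrow> {1..k}.\<close>
definition colourings :: "'a set \<Rightarrow> ('a \<times> 'a) set \<Rightarrow> nat \<Rightarrow> ('a \<Rightarrow> nat) set" where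
  "colourings V E k = {c. (\<forall>v\<in>V. c v \<in> {1..k}) \<and> (\<forall>v. v \<notin> V \<longrightarrow> c v = 0)
                          \<and> (\<forall>(u, v)\<in>E. c u \<noteq> c v)}"

definition chromatic_number :: "'a set \<Rightarrow> ('a \<times> 'a) set \<Rightarrow> nat" where
  "chromatic_number V E = (LEAST k. colourings V E k \<noteq> {})"

definition kempe_component :: "'a set \<Rightarrow> ('a \<times> 'a) set \<Rightarrow> ('a \<Rightarrow> nat) \<Rightarrow> nat \<Rightarrow> nat \<Rightarrow> 'a set \<Rightarrow> bool" where
  "kempe_component V E c i j H \<longleftrightarrow>
     (let S = {v\<in>V. c v = i \<or> c v = j} in
        \<exists>u\<in>S. H = {v\<in>S. (u, v) \<in> (E \<inter> (S \<times> S))\<^sup>*})"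

definition kempe_swap :: "('a \<Rightarrow> nat) \<Rightarrow> nat \<Rightarrow> nat \<Rightarrow> 'a set \<Rightarrow> 'a \<Rightarrow> nat" where
  "kempe_swap c i j H = (\<lambda>v. if v \<in> H then (if c v = i then j else if c v = j then i else c v) else c v)"

definition kempe_edges :: "'a set \<Rightarrow> ('a \<times> 'a) set \<Rightarrow> nat \<Rightarrow> (('a \<Rightarrow> nat) \<times> ('a \<Rightarrow> nat)) set" where
  "kempe_edges V E k = {(c, d). c \<in> colourings V E k \<and> d \<in> colourings V E k \<and> c \<noteq> d \<and>
      (\<exists>i\<in>{1..k}. \<exists>j\<in>{1..k}. \<exists>H. i \<noteq> j \<and> kempe_component V E c i j H \<and> d = kempe_swap c i j H)}"

end

theory Submission
  imports Defs
begin

text \<open>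
A Kempe swap exchanges two colours on a connected set D that is closed under neighbours of
those two colours. If a colouring e is adjacent in the Kempe graph to both ends of a swap
c -- d with at least two vertices in D, then e agrees with c or with d on all of D, and the
closedness of the swap c -- e (or d -- e) then forces e = d (or e = c). Hence the three
colourings of a triangle of the Kempe graph differ pairwise at one common vertex, and for an
edge c d on a triangle the set {d} together with the common neighbours of c and d is the set
R_c(v) of all recolourings of c at a single vertex v.

Now fix a colouring c that leaves two colours a, b unused; it exists because k exceeds the
chromatic number by at least two. Then each R_c(v) arises in this way, v is determined by
R_c(v), and u v is an edge of G exactly when some d in R_c(u) and e in R_c(v) have no common
neighbour other than c to which both are joined by triangle edges: for an edge take
d = c(u := a), e = c(v := a); for a non-edge, d(v := e v) is such a common neighbour. These
notions are invariant under isomorphism, so an isomorphism of the Kempe graphs yields an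
injective homomorphism from G to G'. By symmetry there is one from G' to G, and two finite
graphs with injective homomorphisms in both directions are isomorphic.
\<close>

lemma colouringsI:
  assumes "\<And>w. w \<in> V \<Longrightarrow> c w \<in> {1..k}" and "\<And>w. w \<notin> V \<Longrightarrow> c w = 0"
    and "\<And>u v. (u, v) \<in> E \<Longrightarrow> c u \<noteq> c v"
  shows "c \<in> colourings V E k"
  using assms unfolding colourings_def by auto

lemma colouring_proper: "c \<in> colourings V E k \<Longrightarrow> (u, v) \<in> E \<Longrightarrow> c u \<noteq> c v"
  unfolding colourings_def by auto

lemma colourings_mono: "k \<le> k' \<Longrightarrow> colourings V E k \<subseteq> colourings V E k'"
  unfolding colourings_def by auto

definition diff_set :: "('a \<Rightarrow> nat) \<Rightarrow> ('a \<Rightarrow> nat) \<Rightarrow> 'a set" where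
  "diff_set x y = {w. x w \<noteq> y w}"

lemma diff_set_commute: "diff_set x y = diff_set y x"
  unfolding diff_set_def by auto

lemma diff_set_empty_iff: "diff_set x y = {} \<longleftrightarrow> x = y"
  unfolding diff_set_def by (auto simp: fun_eq_iff)

lemma diff_set_singletonI:
  assumes "x v \<noteq> y v" and "\<And>w. w \<noteq> v \<Longrightarrow> x w = y w"
  shows "diff_set x y = {v}"
  using assms unfolding diff_set_def by auto

lemma diff_set_singletonD:
  assumes "diff_set x y = {v}"
  shows "x v \<noteq> y v" and "w \<noteq> v \<Longrightarrow> x w = y w"
  using assms unfolding diff_set_def by auto

lemma diff_set_subset_colourings:
  assumes "x \<in> colourings V E k" and "y \<in> colourings V E k'"
  shows "diff_set x y \<subseteq> V"
  using assms unfolding colourings_def diff_set_def by fastforce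

lemma kempe_edgesD:
  assumes "(x, y) \<in> kempe_edges V E k"
  shows "x \<in> colourings V E k" and "y \<in> colourings V E k" and "x \<noteq> y"
  using assms unfolding kempe_edges_def by blast+

lemma sym_kempe_edges: "sym (kempe_edges V E k)"
proof (rule symI)
  fix x y assume "(x, y) \<in> kempe_edges V E k"
  then obtain i j H where xy: "x \<in> colourings V E k" "y \<in> colourings V E k" "x \<noteq> y"
    and ij: "i \<in> {1..k}" "j \<in> {1..k}" "i \<noteq> j" and comp: "kempe_component V E x i j H"
    and y: "y = kempe_swap x i j H"
    unfolding kempe_edges_def by blast
  have same_colour_classes: "{v\<in>V. y v = i \<or> y v = j} = {v\<in>V. x v = i \<or> x v = j}"
    unfolding y kempe_swap_def by auto
  have "kempe_component V E y i j H"
    using comp unfolding kempe_component_def Let_def same_colour_classes .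
  moreover have "H \<subseteq> {v\<in>V. x v = i \<or> x v = j}"
    using comp unfolding kempe_component_def Let_def by auto
  then have "x = kempe_swap y i j H"
    using ij(3) unfolding y kempe_swap_def by (auto simp: fun_eq_iff)
  ultimately show "(y, x) \<in> kempe_edges V E k"
    unfolding kempe_edges_def using xy ij by blast
qed

lemma single_vertex_kempe_edge:
  assumes x: "x \<in> colourings V E k" and y: "y \<in> colourings V E k"
    and D: "diff_set x y = {v}"
  shows "(x, y) \<in> kempe_edges V E k"
proof -
  have xv: "x v \<noteq> y v" and same: "\<And>w. w \<noteq> v \<Longrightarrow> x w = y w"
    using diff_set_singletonD[OF D] by auto
  define S where "S = {w\<in>V. x w = x v \<or> x w = y v}"
  have "v \<in> V" using diff_set_subset_colourings[OF x y] D by blast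
  then have colours: "x v \<in> {1..k}" "y v \<in> {1..k}" and vS: "v \<in> S"
    using x y unfolding colourings_def S_def by auto
  have isolated: "(v, w) \<notin> E \<inter> S \<times> S" for w
  proof
    assume "(v, w) \<in> E \<inter> S \<times> S"
    then have vw: "(v, w) \<in> E" and "w \<in> S" by auto
    have "x w \<noteq> x v" using colouring_proper[OF x vw] by simp
    then have "w \<noteq> v" by blast
    then have "x w = y w" by (rule same)
    moreover have "y w \<noteq> y v" using colouring_proper[OF y vw] by simp
    ultimately show False using \<open>w \<in> S\<close> \<open>x w \<noteq> x v\<close> unfolding S_def by auto
  qed
  have "{w\<in>S. (v, w) \<in> (E \<inter> S \<times> S)\<^sup>*} = {v}"
    using vS isolated by (auto elim: converse_rtranclE)
  then have "kempe_component V E x (x v) (y v) {v}"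
    unfolding kempe_component_def Let_def S_def[symmetric] using vS by blast
  moreover have "y = kempe_swap x (x v) (y v) {v}"
  proof
    fix w show "y w = kempe_swap x (x v) (y v) {v} w"
      using same[of w] unfolding kempe_swap_def by (cases "w = v") auto
  qed
  ultimately show ?thesis
    unfolding kempe_edges_def using x y xv colours by blast
qed

section \<open>Kempe changes\<close>

lemma rtrancl_crossing_step:
  assumes "(u, t) \<in> R\<^sup>*" and "P u" and "\<not> P t"
  shows "\<exists>p q. (u, p) \<in> R\<^sup>* \<and> (p, q) \<in> R \<and> P p \<and> \<not> P q"
  using assms
proof (induction rule: rtrancl_induct)
  case base
  then show ?case by simp
next
  case (step s t)
  show ?case
  proof (cases "P s")
    case True
    then show ?thesis using step.hyps step.prems(2) by blast
  next
    case False
    then show ?thesis using step.IH step.prems(1) by blast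
  qed
qed

text \<open>Connectivity stated via cuts, so that no notion of path is needed.\<close>

definition connected_on :: "('a \<times> 'a) set \<Rightarrow> 'a set \<Rightarrow> bool" where
  "connected_on E D \<longleftrightarrow> (\<forall>P a b. a \<in> D \<longrightarrow> b \<in> D \<longrightarrow> P a \<longrightarrow> \<not> P b \<longrightarrow>
      (\<exists>p q. p \<in> D \<and> q \<in> D \<and> (p, q) \<in> E \<and> P p \<and> \<not> P q))"

lemma connected_on_reachable:
  assumes "sym E"
  shows "connected_on E {v\<in>S. (u, v) \<in> (E \<inter> S \<times> S)\<^sup>*}"
  unfolding connected_on_def
proof (intro allI impI)
  let ?R = "E \<inter> S \<times> S"
  let ?H = "{v\<in>S. (u, v) \<in> ?R\<^sup>*}"
  have step: "p \<in> ?H \<and> q \<in> ?H" if "(u, p) \<in> ?R\<^sup>*" and "(p, q) \<in> ?R" for p q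
    using that by (auto intro: rtrancl_into_rtrancl)
  fix P a b assume "a \<in> ?H" "b \<in> ?H" "P a" "\<not> P b"
  show "\<exists>p q. p \<in> ?H \<and> q \<in> ?H \<and> (p, q) \<in> E \<and> P p \<and> \<not> P q"
  proof (cases "P u")
    case True
    then obtain p q where "(u, p) \<in> ?R\<^sup>*" "(p, q) \<in> ?R" "P p" "\<not> P q"
      using rtrancl_crossing_step[of u b ?R P] \<open>b \<in> ?H\<close> \<open>\<not> P b\<close> by blast
    then show ?thesis using step by blast
  next
    case False
    then obtain p q where "(u, p) \<in> ?R\<^sup>*" "(p, q) \<in> ?R" "\<not> P p" "P q"
      using rtrancl_crossing_step[of u a ?R "\<lambda>w. \<not> P w"] \<open>a \<in> ?H\<close> \<open>P a\<close> by blast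
    moreover have "(q, p) \<in> E" using calculation(2) assms by (blast dest: symD)
    ultimately show ?thesis using step by blast
  qed
qed

text \<open>Those properties of a Kempe swap from x to y on the colours i, j that the argument needs;
  the swapped set is recovered as the set where x and y differ.\<close>

definition kempe_change :: "('a \<times> 'a) set \<Rightarrow> nat \<Rightarrow> nat \<Rightarrow> ('a \<Rightarrow> nat) \<Rightarrow> ('a \<Rightarrow> nat) \<Rightarrow> bool" where
  "kempe_change E i j x y \<longleftrightarrow> i \<noteq> j \<and>
     (\<forall>w\<in>diff_set x y. x w = i \<and> y w = j \<or> x w = j \<and> y w = i) \<and>
     connected_on E (diff_set x y) \<and>
     (\<forall>w\<in>diff_set x y. \<forall>z. (w, z) \<in> E \<longrightarrow> x z = i \<or> x z = j \<longrightarrow> z \<in> diff_set x y)"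

lemma kempe_change_swap:
  assumes "kempe_change E i j x y" and "w \<in> diff_set x y"
  shows "x w = i \<and> y w = j \<or> x w = j \<and> y w = i"
  using assms unfolding kempe_change_def by blast

lemma kempe_change_connected:
  assumes "kempe_change E i j x y" and "a \<in> diff_set x y" and "b \<in> diff_set x y"
    and "P a" and "\<not> P b"
  obtains p q where "p \<in> diff_set x y" "q \<in> diff_set x y" "(p, q) \<in> E" "P p" "\<not> P q"
proof -
  have "connected_on E (diff_set x y)"
    using assms(1) unfolding kempe_change_def by simp
  from this[unfolded connected_on_def, rule_format, where P = P and a = a and b = b] assms(2-5)
  show thesis using that by blast
qed

lemma kempe_change_closed:
  assumes "kempe_change E i j x y" and "w \<in> diff_set x y" and "(w, z) \<in> E"
    and "x z = i \<or> x z = j"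
  shows "z \<in> diff_set x y"
  using assms unfolding kempe_change_def by blast

lemma kempe_edge_imp_kempe_change:
  assumes G: "simple_graph V E" and xy: "(x, y) \<in> kempe_edges V E k"
  obtains i j where "kempe_change E i j x y"
proof -
  obtain i j H where ij: "i \<noteq> j" and comp: "kempe_component V E x i j H"
    and y: "y = kempe_swap x i j H"
    using xy unfolding kempe_edges_def by blast
  define S where "S = {v\<in>V. x v = i \<or> x v = j}"
  obtain u where H: "H = {v\<in>S. (u, v) \<in> (E \<inter> S \<times> S)\<^sup>*}"
    using comp unfolding kempe_component_def Let_def S_def[symmetric] by blast
  have symE: "sym E" and EV: "E \<subseteq> V \<times> V"
    using G unfolding simple_graph_def by auto
  have HS: "H \<subseteq> S"
    unfolding H by blast
  have D: "diff_set x y = H"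
    using HS ij unfolding diff_set_def y kempe_swap_def S_def by auto
  have swap: "\<forall>w\<in>diff_set x y. x w = i \<and> y w = j \<or> x w = j \<and> y w = i"
  proof
    fix w assume "w \<in> diff_set x y"
    then have "w \<in> H" "x w = i \<or> x w = j" using HS unfolding D S_def by auto
    then show "x w = i \<and> y w = j \<or> x w = j \<and> y w = i"
      using ij unfolding y kempe_swap_def by auto
  qed
  have connected: "connected_on E (diff_set x y)"
    unfolding D H by (rule connected_on_reachable[OF symE])
  have closed: "\<forall>w\<in>diff_set x y. \<forall>z. (w, z) \<in> E \<longrightarrow> x z = i \<or> x z = j \<longrightarrow> z \<in> diff_set x y"
  proof (intro ballI allI impI)
    fix w z assume "w \<in> diff_set x y" "(w, z) \<in> E" "x z = i \<or> x z = j"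
    then have "w \<in> H" "(w, z) \<in> E \<inter> S \<times> S" using HS EV unfolding D S_def by auto
    then show "z \<in> diff_set x y" unfolding D H by (auto intro: rtrancl_into_rtrancl)
  qed
  show thesis using that ij swap connected closed unfolding kempe_change_def by blast
qed

lemma kempe_change_eq_if_agrees:
  assumes xy: "kempe_change E i j x y" and xe: "kempe_change E i' j' x e"
    and a: "a \<in> diff_set x y" and agree: "\<forall>w\<in>diff_set x y. e w = y w"
  shows "e = y"
proof -
  have ea: "e a = y a" using agree a by blast
  then have a': "a \<in> diff_set x e" using a unfolding diff_set_def by simp
  have sub: "diff_set x e \<subseteq> diff_set x y"
  proof
    fix z assume z: "z \<in> diff_set x e"
    show "z \<in> diff_set x y"
    proof (rule ccontr)
      assume "z \<notin> diff_set x y"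
      then obtain p q where pq: "q \<in> diff_set x e" "(p, q) \<in> E"
          "p \<in> diff_set x y" "q \<notin> diff_set x y"
        using kempe_change_connected[OF xe a' z, of "\<lambda>w. w \<in> diff_set x y"] a by blast
      txt \<open>The swap from x to e exchanges the colours x a and e a = y a, which are i and j.\<close>
      have "x q = i \<or> x q = j"
        using kempe_change_swap[OF xy a] kempe_change_swap[OF xe a']
          kempe_change_swap[OF xe pq(1)] ea by auto
      then show False using kempe_change_closed[OF xy pq(3,2)] pq(4) by blast
    qed
  qed
  show "e = y"
  proof
    fix w show "e w = y w"
    proof (cases "w \<in> diff_set x y")
      case True
      then show ?thesis using agree by blast
    next
      case False
      then have "w \<notin> diff_set x e" using sub by blast
      with False show ?thesis unfolding diff_set_def by simp
    qed
  qed
qed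

section \<open>Triangles of the Kempe graph\<close>

lemma kempe_triangle_edge_agreement:
  assumes cd: "kempe_change E i1 j1 c d" and ce: "kempe_change E i2 j2 c e"
    and de: "kempe_change E i3 j3 d e"
    and p: "p \<in> diff_set c d" and q: "q \<in> diff_set c d"
    and cpq: "c p \<noteq> c q" and epq: "e p \<noteq> e q"
  shows "e p = c p \<and> e q = c q \<or> e p = d p \<and> e q = d q"
proof -
  have ce_swap: "c w = i2 \<and> e w = j2 \<or> c w = j2 \<and> e w = i2" if "c w \<noteq> e w" for w
    using kempe_change_swap[OF ce] that unfolding diff_set_def by blast
  have de_swap: "d w = i3 \<and> e w = j3 \<or> d w = j3 \<and> e w = i3" if "d w \<noteq> e w" for w
    using kempe_change_swap[OF de] that unfolding diff_set_def by blast
  have "i1 \<noteq> j1" "i2 \<noteq> j2" "i3 \<noteq> j3"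
    using cd ce de unfolding kempe_change_def by auto
  then show ?thesis
    using kempe_change_swap[OF cd p] kempe_change_swap[OF cd q] cpq epq
      ce_swap[of p] ce_swap[of q] de_swap[of p] de_swap[of q]
    by smt
qed

lemma kempe_triangle_agrees_on_diff_set:
  assumes cd: "kempe_change E i1 j1 c d" and ce: "kempe_change E i2 j2 c e"
    and de: "kempe_change E i3 j3 d e"
    and proper: "\<And>p q. (p, q) \<in> E \<Longrightarrow> c p \<noteq> c q \<and> e p \<noteq> e q"
    and a: "a \<in> diff_set c d" and b: "b \<in> diff_set c d" and ab: "a \<noteq> b"
  shows "(\<forall>w\<in>diff_set c d. e w = c w) \<or> (\<forall>w\<in>diff_set c d. e w = d w)"
proof -
  let ?D = "diff_set c d"
  have edge: "e p = c p \<and> e q = c q \<or> e p = d p \<and> e q = d q"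
    if "p \<in> ?D" "q \<in> ?D" "(p, q) \<in> E" for p q
    using kempe_triangle_edge_agreement[OF cd ce de that(1,2)] proper[OF that(3)] by blast
  have nbr: "\<exists>q\<in>?D. (w, q) \<in> E" if w: "w \<in> ?D" for w
  proof -
    obtain w' where "w' \<in> ?D" "w' \<noteq> w" using a b ab by blast
    then show ?thesis
      using kempe_change_connected[OF cd w \<open>w' \<in> ?D\<close>, of "\<lambda>v. v = w"] by blast
  qed
  show ?thesis
  proof (cases "\<exists>w\<in>?D. e w = c w")
    case True
    then obtain w0 where w0: "w0 \<in> ?D" "e w0 = c w0" by blast
    have "e w = c w" if w: "w \<in> ?D" for w
    proof (rule ccontr)
      assume "e w \<noteq> c w"
      then obtain p q where pq: "p \<in> ?D" "q \<in> ?D" "(p, q) \<in> E" "e p = c p" "e q \<noteq> c q"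
        using kempe_change_connected[OF cd w0(1) w, of "\<lambda>v. e v = c v"] w0(2) by blast
      have "c p \<noteq> d p" using pq(1) unfolding diff_set_def by blast
      then show False using edge[OF pq(1-3)] pq(4,5) by argo
    qed
    then show ?thesis by blast
  next
    case False
    have "e w = d w" if w: "w \<in> ?D" for w
      using nbr[OF w] edge[OF w] False w by blast
    then show ?thesis by blast
  qed
qed

lemma kempe_triangle_diff_set_subsingleton:
  assumes G: "simple_graph V E"
    and cd: "(c, d) \<in> kempe_edges V E k" and ce: "(c, e) \<in> kempe_edges V E k"
    and de: "(d, e) \<in> kempe_edges V E k"
    and a: "a \<in> diff_set c d" and b: "b \<in> diff_set c d"
  shows "a = b"
proof (rule ccontr)
  assume ab: "a \<noteq> b"
  have dc: "(d, c) \<in> kempe_edges V E k" using symD[OF sym_kempe_edges cd] .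
  obtain i1 j1 where kcd: "kempe_change E i1 j1 c d" using kempe_edge_imp_kempe_change[OF G cd] .
  obtain i2 j2 where kce: "kempe_change E i2 j2 c e" using kempe_edge_imp_kempe_change[OF G ce] .
  obtain i3 j3 where kde: "kempe_change E i3 j3 d e" using kempe_edge_imp_kempe_change[OF G de] .
  obtain i4 j4 where kdc: "kempe_change E i4 j4 d c" using kempe_edge_imp_kempe_change[OF G dc] .
  have proper: "c p \<noteq> c q \<and> e p \<noteq> e q" if "(p, q) \<in> E" for p q
    using colouring_proper[OF kempe_edgesD(1)[OF ce] that]
      colouring_proper[OF kempe_edgesD(2)[OF ce] that] by blast
  from kempe_triangle_agrees_on_diff_set[OF kcd kce kde proper a b ab] show False
  proof
    assume "\<forall>w\<in>diff_set c d. e w = c w"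
    then have "e = c"
      using kempe_change_eq_if_agrees[OF kdc kde] a unfolding diff_set_commute[of d c] by blast
    then show False using kempe_edgesD(3)[OF ce] by simp
  next
    assume "\<forall>w\<in>diff_set c d. e w = d w"
    then have "e = d" using kempe_change_eq_if_agrees[OF kcd kce a] by blast
    then show False using kempe_edgesD(3)[OF de] by simp
  qed
qed

lemma kempe_triangle_single_vertex:
  assumes G: "simple_graph V E"
    and cd: "(c, d) \<in> kempe_edges V E k" and ce: "(c, e) \<in> kempe_edges V E k"
    and de: "(d, e) \<in> kempe_edges V E k"
  obtains v where "diff_set c d = {v}" and "diff_set c e = {v}"
proof -
  let ?F = "kempe_edges V E k"
  have singleton: "\<exists>v. diff_set x y = {v}"
    if xy: "(x, y) \<in> ?F" and "(x, z) \<in> ?F" "(y, z) \<in> ?F" for x y z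
  proof -
    obtain v where "v \<in> diff_set x y"
      using kempe_edgesD(3)[OF xy] diff_set_empty_iff by blast
    then show ?thesis
      using kempe_triangle_diff_set_subsingleton[OF G that] by blast
  qed
  have ed: "(e, d) \<in> ?F" and dc: "(d, c) \<in> ?F" and ec: "(e, c) \<in> ?F"
    using sym_kempe_edges de cd ce by (blast dest: symD)+
  obtain v1 where v1: "diff_set c d = {v1}" using singleton[OF cd ce de] by blast
  obtain v2 where v2: "diff_set c e = {v2}" using singleton[OF ce cd ed] by blast
  have "v1 = v2"
  proof (rule ccontr)
    assume "v1 \<noteq> v2"
    then have "c v1 \<noteq> d v1" "e v1 = c v1" "c v2 \<noteq> e v2" "d v2 = c v2"
      using diff_set_singletonD(1)[OF v1] diff_set_singletonD(2)[OF v2, of v1]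
        diff_set_singletonD(1)[OF v2] diff_set_singletonD(2)[OF v1, of v2] by auto
    then have "v1 \<in> diff_set d e" and "v2 \<in> diff_set d e"
      unfolding diff_set_def by auto
    then show False
      using kempe_triangle_diff_set_subsingleton[OF G de dc ec] \<open>v1 \<noteq> v2\<close> by blast
  qed
  then show thesis using that v1 v2 by blast
qed

section \<open>Notions invariant under graph isomorphism\<close>

text \<open>In the Kempe graph, for an edge c d lying on a triangle, edge_nbhd F c d is the set of
  recolourings of c at a single vertex (see kempe_edge_nbhd). The notions below are
  defined from the edge relation alone, so that they are transported by isomorphisms.\<close>

definition edge_nbhd :: "('c \<times> 'c) set \<Rightarrow> 'c \<Rightarrow> 'c \<Rightarrow> 'c set" where
  "edge_nbhd F c d = insert d {e. (c, e) \<in> F \<and> (d, e) \<in> F}"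

definition triangle_nbhds :: "('c \<times> 'c) set \<Rightarrow> 'c \<Rightarrow> 'c set set" where
  "triangle_nbhds F c = {edge_nbhd F c d | d. (c, d) \<in> F \<and> (\<exists>e. (c, e) \<in> F \<and> (d, e) \<in> F)}"

definition triangle_edge :: "('c \<times> 'c) set \<Rightarrow> 'c \<Rightarrow> 'c \<Rightarrow> bool" where
  "triangle_edge F x y \<longleftrightarrow> (x, y) \<in> F \<and> (\<exists>z. (x, z) \<in> F \<and> (y, z) \<in> F)"

definition nbhds_linked :: "('c \<times> 'c) set \<Rightarrow> 'c \<Rightarrow> 'c set \<Rightarrow> 'c set \<Rightarrow> bool" where
  "nbhds_linked F c A B \<longleftrightarrow> A \<in> triangle_nbhds F c \<and> B \<in> triangle_nbhds F c \<and> A \<noteq> B \<and>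
     (\<exists>d\<in>A. \<exists>e\<in>B. \<forall>f. triangle_edge F d f \<and> triangle_edge F e f \<longrightarrow> f = c)"

locale graph_isomorphism =
  fixes W :: "'c set" and F :: "('c \<times> 'c) set" and W' :: "'d set" and F' :: "('d \<times> 'd) set"
    and \<phi> :: "'c \<Rightarrow> 'd"
  assumes bij: "bij_betw \<phi> W W'"
    and edges_within: "F \<subseteq> W \<times> W" and edges_within': "F' \<subseteq> W' \<times> W'"
    and edge_iff: "\<And>x y. x \<in> W \<Longrightarrow> y \<in> W \<Longrightarrow> (\<phi> x, \<phi> y) \<in> F' \<longleftrightarrow> (x, y) \<in> F"
begin

lemma image_eq_iff: "A \<subseteq> W \<Longrightarrow> B \<subseteq> W \<Longrightarrow> \<phi> ` A = \<phi> ` B \<longleftrightarrow> A = B"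
  using inj_on_image_eq_iff[OF bij_betw_imp_inj_on[OF bij]] by blast

lemma nbr_image:
  assumes "x \<in> W" and "(\<phi> x, y') \<in> F'"
  obtains y where "y \<in> W" and "y' = \<phi> y" and "(x, y) \<in> F"
proof -
  have "y' \<in> \<phi> ` W" using assms(2) edges_within' bij unfolding bij_betw_def by blast
  then obtain y where y: "y \<in> W" "y' = \<phi> y" by blast
  moreover have "(x, y) \<in> F" using edge_iff[OF assms(1) y(1)] assms(2) y(2) by simp
  ultimately show thesis by (rule that)
qed

lemma edge_nbhd_image:
  assumes c: "c \<in> W" and d: "d \<in> W"
  shows "\<phi> ` edge_nbhd F c d = edge_nbhd F' (\<phi> c) (\<phi> d)"
proof -
  have "\<phi> ` {e. (c, e) \<in> F \<and> (d, e) \<in> F} = {e'. (\<phi> c, e') \<in> F' \<and> (\<phi> d, e') \<in> F'}"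
  proof (intro equalityI subsetI)
    fix e' assume "e' \<in> \<phi> ` {e. (c, e) \<in> F \<and> (d, e) \<in> F}"
    then obtain e where "(c, e) \<in> F" "(d, e) \<in> F" "e' = \<phi> e" by blast
    moreover have "e \<in> W" using calculation(1) edges_within by blast
    ultimately show "e' \<in> {e'. (\<phi> c, e') \<in> F' \<and> (\<phi> d, e') \<in> F'}"
      using edge_iff[OF c] edge_iff[OF d] by simp
  next
    fix e' assume "e' \<in> {e'. (\<phi> c, e') \<in> F' \<and> (\<phi> d, e') \<in> F'}"
    then have "(\<phi> c, e') \<in> F'" "(\<phi> d, e') \<in> F'" by auto
    then obtain e where "e \<in> W" "e' = \<phi> e" "(c, e) \<in> F" "(d, e) \<in> F"
      using nbr_image[OF c] edge_iff[OF d] by metis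
    then show "e' \<in> \<phi> ` {e. (c, e) \<in> F \<and> (d, e) \<in> F}" by blast
  qed
  then show ?thesis unfolding edge_nbhd_def by simp
qed

lemma triangle_nbhds_image:
  assumes c: "c \<in> W" and A: "A \<in> triangle_nbhds F c"
  shows "\<phi> ` A \<in> triangle_nbhds F' (\<phi> c)"
proof -
  obtain d e where A_eq: "A = edge_nbhd F c d" and edges: "(c, d) \<in> F" "(c, e) \<in> F" "(d, e) \<in> F"
    using A unfolding triangle_nbhds_def by blast
  have "d \<in> W" "e \<in> W" using edges edges_within by auto
  then have "\<phi> ` A = edge_nbhd F' (\<phi> c) (\<phi> d)"
    and "(\<phi> c, \<phi> d) \<in> F'" "(\<phi> c, \<phi> e) \<in> F'" "(\<phi> d, \<phi> e) \<in> F'"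
    using A_eq edge_nbhd_image c edges edge_iff by auto
  then show ?thesis unfolding triangle_nbhds_def by blast
qed

lemma triangle_nbhds_subset:
  assumes "A \<in> triangle_nbhds F c"
  shows "A \<subseteq> W"
  using assms edges_within unfolding triangle_nbhds_def edge_nbhd_def by blast

lemma triangle_edge_image:
  assumes x: "x \<in> W" and y: "y \<in> W"
  shows "triangle_edge F' (\<phi> x) (\<phi> y) \<longleftrightarrow> triangle_edge F x y"
proof
  assume "triangle_edge F' (\<phi> x) (\<phi> y)"
  then obtain z' where xy': "(\<phi> x, \<phi> y) \<in> F'" and xz': "(\<phi> x, z') \<in> F'"
    and yz': "(\<phi> y, z') \<in> F'"
    unfolding triangle_edge_def by blast
  obtain z where z: "z \<in> W" "z' = \<phi> z" and "(x, z) \<in> F"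
    using nbr_image[OF x xz'] .
  moreover have "(x, y) \<in> F" using edge_iff[OF x y] xy' by simp
  moreover have "(y, z) \<in> F" using edge_iff[OF y z(1)] yz' z(2) by simp
  ultimately show "triangle_edge F x y" unfolding triangle_edge_def by blast
next
  assume "triangle_edge F x y"
  then obtain z where "(x, y) \<in> F" "(x, z) \<in> F" "(y, z) \<in> F"
    unfolding triangle_edge_def by blast
  moreover have z: "z \<in> W" using calculation(2) edges_within by blast
  ultimately show "triangle_edge F' (\<phi> x) (\<phi> y)"
    unfolding triangle_edge_def using edge_iff[OF x y] edge_iff[OF x z] edge_iff[OF y z] by blast
qed

lemma nbhds_linked_image:
  assumes c: "c \<in> W" and linked: "nbhds_linked F c A B"
  shows "nbhds_linked F' (\<phi> c) (\<phi> ` A) (\<phi> ` B)"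
proof -
  obtain d e where A: "A \<in> triangle_nbhds F c" and B: "B \<in> triangle_nbhds F c" and "A \<noteq> B"
    and d: "d \<in> A" and e: "e \<in> B"
    and only_c: "\<And>f. triangle_edge F d f \<Longrightarrow> triangle_edge F e f \<Longrightarrow> f = c"
    using linked unfolding nbhds_linked_def by blast
  have AW: "A \<subseteq> W" and BW: "B \<subseteq> W" using triangle_nbhds_subset A B by auto
  then have dW: "d \<in> W" and eW: "e \<in> W" using d e by auto
  have "\<phi> ` A \<noteq> \<phi> ` B" using image_eq_iff[OF AW BW] \<open>A \<noteq> B\<close> by blast
  moreover have "f' = \<phi> c"
    if de': "triangle_edge F' (\<phi> d) f'" "triangle_edge F' (\<phi> e) f'" for f'
  proof -
    obtain f where f: "f \<in> W" "f' = \<phi> f"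
      using de'(1) nbr_image[OF dW] unfolding triangle_edge_def by metis
    then have "triangle_edge F d f" "triangle_edge F e f"
      using de' triangle_edge_image[OF dW f(1)] triangle_edge_image[OF eW f(1)] by simp_all
    then show ?thesis using only_c f(2) by simp
  qed
  ultimately show ?thesis
    unfolding nbhds_linked_def using triangle_nbhds_image[OF c] A B d e by blast
qed

end

lemma graph_iso_imp_graph_isomorphism:
  assumes "graph_iso W F W' F'" and "F \<subseteq> W \<times> W" and "F' \<subseteq> W' \<times> W'"
  obtains \<phi> where "graph_isomorphism W F W' F' \<phi>"
proof -
  obtain \<phi> where "bij_betw \<phi> W W'" and "\<forall>x\<in>W. \<forall>y\<in>W. (x, y) \<in> F \<longleftrightarrow> (\<phi> x, \<phi> y) \<in> F'"
    using assms(1) unfolding graph_iso_def by blast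
  with assms(2,3) have "graph_isomorphism W F W' F' \<phi>"
    by unfold_locales auto
  then show thesis by (rule that)
qed

section \<open>Recolourings at a single vertex\<close>

definition recolourings_at ::
    "'a set \<Rightarrow> ('a \<times> 'a) set \<Rightarrow> nat \<Rightarrow> ('a \<Rightarrow> nat) \<Rightarrow> 'a \<Rightarrow> ('a \<Rightarrow> nat) set" where
  "recolourings_at V E k c v = {d \<in> colourings V E k. diff_set c d = {v}}"

lemma recolourings_at_unique:
  "d \<in> recolourings_at V E k c u \<Longrightarrow> d \<in> recolourings_at V E k c v \<Longrightarrow> u = v"
  unfolding recolourings_at_def by auto

lemma recolourings_atD:
  assumes "d \<in> recolourings_at V E k c v"
  shows "d \<in> colourings V E k" and "d v \<noteq> c v" and "w \<noteq> v \<Longrightarrow> d w = c w"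
  using assms diff_set_singletonD[of c d v] unfolding recolourings_at_def by auto

lemma recolourings_at_diff_set:
  assumes d: "d \<in> recolourings_at V E k c v" and e: "e \<in> recolourings_at V E k c v" and "d \<noteq> e"
  shows "diff_set d e = {v}"
proof (rule diff_set_singletonI)
  show same: "d w = e w" if "w \<noteq> v" for w
    using recolourings_atD(3)[OF d that] recolourings_atD(3)[OF e that] by simp
  show "d v \<noteq> e v"
  proof
    assume "d v = e v"
    then have "d w = e w" for w using same by (cases "w = v") auto
    then show False using \<open>d \<noteq> e\<close> by blast
  qed
qed

lemma recolouring_at_kempe_edge:
  assumes "c \<in> colourings V E k" and "d \<in> recolourings_at V E k c v"
  shows "(c, d) \<in> kempe_edges V E k"
proof (rule single_vertex_kempe_edge[OF assms(1)])
  show "d \<in> colourings V E k" "diff_set c d = {v}"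
    using assms(2) unfolding recolourings_at_def by auto
qed

lemma recolourings_at_kempe_edge:
  assumes d: "d \<in> recolourings_at V E k c v" and e: "e \<in> recolourings_at V E k c v" and "d \<noteq> e"
  shows "(d, e) \<in> kempe_edges V E k"
  using single_vertex_kempe_edge[OF recolourings_atD(1)[OF d] recolourings_atD(1)[OF e]]
    recolourings_at_diff_set[OF assms] .

lemma recolourings_at_triangle_edge:
  assumes c: "c \<in> colourings V E k" and d: "d \<in> recolourings_at V E k c v"
    and e: "e \<in> recolourings_at V E k c v" and "d \<noteq> e"
  shows "triangle_edge (kempe_edges V E k) c d"
  unfolding triangle_edge_def
  using recolouring_at_kempe_edge[OF c d] recolouring_at_kempe_edge[OF c e]
    recolourings_at_kempe_edge[OF d e \<open>d \<noteq> e\<close>] by blast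

lemma kempe_edge_nbhd:
  assumes G: "simple_graph V E"
    and cd: "(c, d) \<in> kempe_edges V E k" and ce: "(c, e) \<in> kempe_edges V E k"
    and de: "(d, e) \<in> kempe_edges V E k"
  obtains v where "d \<in> recolourings_at V E k c v"
    and "edge_nbhd (kempe_edges V E k) c d = recolourings_at V E k c v"
proof -
  let ?F = "kempe_edges V E k" and ?R = "recolourings_at V E k c"
  obtain v where v: "diff_set c d = {v}" and "diff_set c e = {v}"
    by (rule kempe_triangle_single_vertex[OF G cd ce de])
  have c: "c \<in> colourings V E k" and d: "d \<in> colourings V E k"
    using kempe_edgesD[OF cd] by auto
  have dR: "d \<in> ?R v" unfolding recolourings_at_def using d v by blast
  have "edge_nbhd ?F c d = ?R v"
  proof (intro equalityI subsetI)
    fix x assume "x \<in> edge_nbhd ?F c d"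
    then consider "x = d" | "(c, x) \<in> ?F" "(d, x) \<in> ?F"
      unfolding edge_nbhd_def by blast
    then show "x \<in> ?R v"
    proof cases
      case 1
      then show ?thesis using dR by simp
    next
      case 2
      obtain v' where "diff_set c d = {v'}" and cx: "diff_set c x = {v'}"
        by (rule kempe_triangle_single_vertex[OF G cd 2])
      then have "v' = v" using v by simp
      then show ?thesis
        using cx kempe_edgesD(2)[OF 2(1)] unfolding recolourings_at_def by simp
    qed
  next
    fix x assume x: "x \<in> ?R v"
    show "x \<in> edge_nbhd ?F c d"
    proof (cases "x = d")
      case True
      then show ?thesis unfolding edge_nbhd_def by simp
    next
      case False
      then have "(c, x) \<in> ?F" "(d, x) \<in> ?F"
        using recolouring_at_kempe_edge[OF c x] recolourings_at_kempe_edge[OF dR x] by auto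
      then show ?thesis unfolding edge_nbhd_def by blast
    qed
  qed
  with dR that show thesis by blast
qed

lemma kempe_triangle_nbhds:
  assumes G: "simple_graph V E" and A: "A \<in> triangle_nbhds (kempe_edges V E k) c"
  obtains v d e where "v \<in> V" and "A = recolourings_at V E k c v"
    and "d \<in> A" and "e \<in> A" and "d \<noteq> e"
proof -
  let ?F = "kempe_edges V E k"
  obtain d e where A_eq: "A = edge_nbhd ?F c d"
    and cd: "(c, d) \<in> ?F" and ce: "(c, e) \<in> ?F" and de: "(d, e) \<in> ?F"
    using A unfolding triangle_nbhds_def by blast
  obtain v where dR: "d \<in> recolourings_at V E k c v" and A_R: "A = recolourings_at V E k c v"
    using kempe_edge_nbhd[OF G cd ce de] A_eq by metis
  have "v \<in> V"
    using diff_set_subset_colourings[OF kempe_edgesD(1,2)[OF cd]] dR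
    unfolding recolourings_at_def by blast
  moreover have "d \<in> A" "e \<in> A" "d \<noteq> e"
    using A_eq ce de kempe_edgesD(3)[OF de] unfolding edge_nbhd_def by auto
  ultimately show thesis using that A_R by blast
qed

lemma recolourings_at_merge:
  assumes d: "d \<in> recolourings_at V E k c u" and e: "e \<in> recolourings_at V E k c v"
    and "u \<noteq> v" and uv: "(u, v) \<notin> E" and vu: "(v, u) \<notin> E"
  shows "d(v := e v) \<in> recolourings_at V E k d v"
    and "d(v := e v) \<in> recolourings_at V E k e u"
proof -
  let ?f = "d(v := e v)"
  have dc: "d \<in> colourings V E k" and ec: "e \<in> colourings V E k"
    using recolourings_atD(1)[OF d] recolourings_atD(1)[OF e] .
  have de: "d w = e w" if "w \<noteq> u" "w \<noteq> v" for w
    using recolourings_atD(3)[OF d that(1)] recolourings_atD(3)[OF e that(2)] by simp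
  have proper: "?f p \<noteq> ?f q" if pq: "(p, q) \<in> E" for p q
  proof -
    have "d p \<noteq> d q" "e p \<noteq> e q"
      using colouring_proper[OF dc pq] colouring_proper[OF ec pq] by auto
    moreover have "p = v \<Longrightarrow> q \<noteq> u" "q = v \<Longrightarrow> p \<noteq> u"
      using pq uv vu by auto
    ultimately show ?thesis using de[of p] de[of q] by auto
  qed
  have f: "?f \<in> colourings V E k"
  proof (rule colouringsI)
    show "?f w \<in> {1..k}" if "w \<in> V" for w
      using that dc ec unfolding colourings_def by auto
    show "?f w = 0" if "w \<notin> V" for w
      using that dc ec unfolding colourings_def by auto
  qed (fact proper)
  have "e v \<noteq> d v"
    using recolourings_atD(2,3)[OF e] recolourings_atD(3)[OF d] \<open>u \<noteq> v\<close> by metis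
  then have "diff_set d ?f = {v}"
    by (intro diff_set_singletonI) auto
  then show "?f \<in> recolourings_at V E k d v"
    unfolding recolourings_at_def using f by blast
  have "d u \<noteq> e u"
    using recolourings_atD(2,3)[OF d] recolourings_atD(3)[OF e] \<open>u \<noteq> v\<close> by metis
  then have "diff_set e ?f = {u}"
    using de \<open>u \<noteq> v\<close> by (intro diff_set_singletonI) auto
  then show "?f \<in> recolourings_at V E k e u"
    unfolding recolourings_at_def using f by blast
qed

lemma recolourings_at_merge_triangle_edges:
  assumes d: "d \<in> recolourings_at V E k c u" "d' \<in> recolourings_at V E k c u" "d \<noteq> d'"
    and e: "e \<in> recolourings_at V E k c v" "e' \<in> recolourings_at V E k c v" "e \<noteq> e'"
    and "u \<noteq> v" and "(u, v) \<notin> E" and "(v, u) \<notin> E"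
  shows "triangle_edge (kempe_edges V E k) d (d(v := e v))"
    and "triangle_edge (kempe_edges V E k) e (d(v := e v))"
proof -
  note merge = recolourings_at_merge[OF _ _ assms(7-9)]
  have "e v \<noteq> e' v"
    using diff_set_singletonD(1)[OF recolourings_at_diff_set[OF e]] .
  then have "d(v := e v) \<noteq> d(v := e' v)" by (metis fun_upd_same)
  then show "triangle_edge (kempe_edges V E k) d (d(v := e v))"
    using recolourings_at_triangle_edge[OF recolourings_atD(1)[OF d(1)]]
      merge(1)[OF d(1) e(1)] merge(1)[OF d(1) e(2)] by blast
  have "d u \<noteq> d' u"
    using diff_set_singletonD(1)[OF recolourings_at_diff_set[OF d]] .
  then have "d(v := e v) \<noteq> d'(v := e v)" by (metis fun_upd_other \<open>u \<noteq> v\<close>)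
  then show "triangle_edge (kempe_edges V E k) e (d(v := e v))"
    using recolourings_at_triangle_edge[OF recolourings_atD(1)[OF e(1)]]
      merge(2)[OF d(1) e(1)] merge(2)[OF d(2) e(1)] by blast
qed

lemma kempe_triangle_nbhds_other:
  assumes G: "simple_graph V E" and "A \<in> triangle_nbhds (kempe_edges V E k) c" and "d \<in> A"
  obtains d' where "d' \<in> A" and "d' \<noteq> d"
proof -
  obtain x y where "x \<in> A" "y \<in> A" "x \<noteq> y"
    using kempe_triangle_nbhds[OF G assms(2)] by metis
  then show thesis using that by (cases "x = d") auto
qed

lemma kempe_nbhds_linked_imp_edge:
  assumes G: "simple_graph V E" and linked:
    "nbhds_linked (kempe_edges V E k) c (recolourings_at V E k c u) (recolourings_at V E k c v)"
  shows "(u, v) \<in> E"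
proof (rule ccontr)
  let ?F = "kempe_edges V E k" and ?R = "recolourings_at V E k c"
  assume uv: "(u, v) \<notin> E"
  then have vu: "(v, u) \<notin> E" using G unfolding simple_graph_def by (blast dest: symD)
  obtain d e where d: "d \<in> ?R u" and e: "e \<in> ?R v"
    and only_c: "\<And>f. triangle_edge ?F d f \<Longrightarrow> triangle_edge ?F e f \<Longrightarrow> f = c"
    using linked unfolding nbhds_linked_def by blast
  have "u \<noteq> v" using linked unfolding nbhds_linked_def by blast
  obtain d' where d': "d' \<in> ?R u" "d \<noteq> d'"
    using kempe_triangle_nbhds_other[OF G _ d] linked unfolding nbhds_linked_def by metis
  obtain e' where e': "e' \<in> ?R v" "e \<noteq> e'"
    using kempe_triangle_nbhds_other[OF G _ e] linked unfolding nbhds_linked_def by metis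
  have "d(v := e v) \<noteq> c"
    using recolourings_atD(2)[OF d] by (metis fun_upd_other \<open>u \<noteq> v\<close>)
  then show False
    using only_c recolourings_at_merge_triangle_edges[OF d d' e e' \<open>u \<noteq> v\<close> uv vu] by blast
qed

section \<open>Colourings with two unused colours\<close>

lemma colourings_chromatic_number:
  assumes G: "simple_graph V E"
  shows "colourings V E (chromatic_number V E) \<noteq> {}"
proof -
  have fin: "finite V" and EV: "E \<subseteq> V \<times> V" and irrefl: "\<And>w. (w, w) \<notin> E"
    using G unfolding simple_graph_def by auto
  obtain h where h: "bij_betw h V {0..<card V}"
    using ex_bij_betw_finite_nat[OF fin] by blast
  have "(\<lambda>w. if w \<in> V then h w + 1 else 0) \<in> colourings V E (card V)"
  proof (rule colouringsI)
    show "(if w \<in> V then h w + 1 else 0) \<in> {1..card V}" if "w \<in> V" for w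
      using that bij_betwE[OF h] by fastforce
    show "(if w \<in> V then h w + 1 else 0) = 0" if "w \<notin> V" for w
      using that by simp
    show "(if p \<in> V then h p + 1 else 0) \<noteq> (if q \<in> V then h q + 1 else 0)" if "(p, q) \<in> E" for p q
    proof -
      have "p \<in> V" "q \<in> V" "p \<noteq> q" using that EV irrefl by auto
      then show ?thesis using h unfolding bij_betw_def inj_on_def by auto
    qed
  qed
  then have "colourings V E (card V) \<noteq> {}" by blast
  then show ?thesis
    unfolding chromatic_number_def by (rule LeastI[where P = "\<lambda>k. colourings V E k \<noteq> {}"])
qed

lemma colouring_with_two_unused_colours:
  assumes G: "simple_graph V E" and k: "chromatic_number V E + 1 < k"
  obtains c a b where "c \<in> colourings V E k" and "a \<noteq> b" and "a \<in> {1..k}" and "b \<in> {1..k}"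
    and "a \<notin> range c" and "b \<notin> range c"
proof -
  let ?\<chi> = "chromatic_number V E"
  obtain c where c: "c \<in> colourings V E ?\<chi>"
    using colourings_chromatic_number[OF G] by blast
  have bounded: "c w \<le> ?\<chi>" for w
    using c unfolding colourings_def by (cases "w \<in> V") auto
  have "k \<noteq> c w" "k - 1 \<noteq> c w" for w
    using bounded[of w] k by linarith+
  then have "k \<notin> range c" "k - 1 \<notin> range c" by blast+
  moreover have "c \<in> colourings V E k" using c colourings_mono[of ?\<chi> k] k by auto
  ultimately show thesis using that[of c k "k - 1"] k by auto
qed

lemma recolour_with_unused_colour:
  assumes c: "c \<in> colourings V E k" and v: "v \<in> V" and a: "a \<in> {1..k}"
    and unused: "a \<notin> range c"
  shows "c(v := a) \<in> recolourings_at V E k c v"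
proof -
  have "c(v := a) \<in> colourings V E k"
  proof (rule colouringsI)
    show "(c(v := a)) w \<in> {1..k}" if "w \<in> V" for w
      using that a c unfolding colourings_def by auto
    show "(c(v := a)) w = 0" if "w \<notin> V" for w
      using that v c unfolding colourings_def by auto
    show "(c(v := a)) p \<noteq> (c(v := a)) q" if "(p, q) \<in> E" for p q
      using colouring_proper[OF c that] unused by auto
  qed
  moreover have "diff_set c (c(v := a)) = {v}"
    using unused by (intro diff_set_singletonI) auto
  ultimately show ?thesis unfolding recolourings_at_def by blast
qed

lemma recolourings_at_inj_on:
  assumes c: "c \<in> colourings V E k" and a: "a \<in> {1..k}" and unused: "a \<notin> range c"
  shows "inj_on (recolourings_at V E k c) V"
proof (rule inj_onI)
  fix u v assume "u \<in> V" "v \<in> V" and eq: "recolourings_at V E k c u = recolourings_at V E k c v"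
  have "c(u := a) \<in> recolourings_at V E k c u"
    using recolour_with_unused_colour[OF c \<open>u \<in> V\<close> a unused] .
  then show "u = v" using eq recolourings_at_unique by metis
qed

lemma recolourings_at_mem_triangle_nbhds:
  assumes G: "simple_graph V E" and c: "c \<in> colourings V E k" and v: "v \<in> V"
    and ab: "a \<noteq> b" "a \<in> {1..k}" "b \<in> {1..k}" and unused: "a \<notin> range c" "b \<notin> range c"
  shows "recolourings_at V E k c v \<in> triangle_nbhds (kempe_edges V E k) c"
proof -
  let ?F = "kempe_edges V E k" and ?R = "recolourings_at V E k c"
  have d: "c(v := a) \<in> ?R v" and e: "c(v := b) \<in> ?R v"
    using recolour_with_unused_colour[OF c v] ab unused by auto
  have de: "c(v := a) \<noteq> c(v := b)"
    using ab(1) by (auto dest: fun_cong[where x = v])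
  have cd: "(c, c(v := a)) \<in> ?F" and ce: "(c, c(v := b)) \<in> ?F"
    and de': "(c(v := a), c(v := b)) \<in> ?F"
    using recolouring_at_kempe_edge[OF c d] recolouring_at_kempe_edge[OF c e]
      recolourings_at_kempe_edge[OF d e de] .
  obtain v' where "c(v := a) \<in> ?R v'" and nbhd: "edge_nbhd ?F c (c(v := a)) = ?R v'"
    by (rule kempe_edge_nbhd[OF G cd ce de'])
  then have "v' = v" using recolourings_at_unique d by metis
  then have "?R v = edge_nbhd ?F c (c(v := a))" using nbhd by simp
  then show ?thesis unfolding triangle_nbhds_def using cd ce de' by blast
qed

lemma kempe_common_triangle_nbr_eq:
  assumes G: "simple_graph V E" and uv: "(u, v) \<in> E" and unused: "a \<notin> range c"
    and df: "triangle_edge (kempe_edges V E k) (c(u := a)) f"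
    and ef: "triangle_edge (kempe_edges V E k) (c(v := a)) f"
  shows "f = c"
proof -
  let ?d = "c(u := a)" and ?e = "c(v := a)"
  obtain w1 where w1: "diff_set ?d f = {w1}"
    using df kempe_triangle_single_vertex[OF G] unfolding triangle_edge_def by metis
  obtain w2 where w2: "diff_set ?e f = {w2}"
    using ef kempe_triangle_single_vertex[OF G] unfolding triangle_edge_def by metis
  have f_d: "f w = ?d w" if "w \<noteq> w1" for w using diff_set_singletonD(2)[OF w1 that] by simp
  have f_e: "f w = ?e w" if "w \<noteq> w2" for w using diff_set_singletonD(2)[OF w2 that] by simp
  have f: "f \<in> colourings V E k" using df kempe_edgesD(2) unfolding triangle_edge_def by blast
  have "u \<noteq> v" using G uv unfolding simple_graph_def by auto
  have a_new: "c w \<noteq> a" for w using unused by auto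
  have "u = w1 \<or> u = w2"
  proof (rule ccontr)
    assume "\<not> (u = w1 \<or> u = w2)"
    then have "f u = a" "f u = c u" using f_d[of u] f_e[of u] \<open>u \<noteq> v\<close> by auto
    then show False using a_new[of u] by simp
  qed
  moreover have "v = w1 \<or> v = w2"
  proof (rule ccontr)
    assume "\<not> (v = w1 \<or> v = w2)"
    then have "f v = c v" "f v = a" using f_d[of v] f_e[of v] \<open>u \<noteq> v\<close> by auto
    then show False using a_new[of v] by simp
  qed
  moreover have "w1 \<noteq> v"
  proof
    assume "w1 = v"
    then have "w2 = u" using \<open>u = w1 \<or> u = w2\<close> \<open>u \<noteq> v\<close> by blast
    then have "f u = a" "f v = a"
      using f_d[of u] f_e[of v] \<open>w1 = v\<close> \<open>u \<noteq> v\<close> by auto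
    then show False using colouring_proper[OF f uv] by simp
  qed
  ultimately have "w1 = u" "w2 = v" using \<open>u \<noteq> v\<close> by auto
  show "f = c"
  proof
    fix w show "f w = c w"
      using f_d[of w] f_e[of w] \<open>w1 = u\<close> \<open>w2 = v\<close> \<open>u \<noteq> v\<close> by (cases "w = u") auto
  qed
qed

lemma kempe_edge_imp_nbhds_linked:
  assumes G: "simple_graph V E" and c: "c \<in> colourings V E k"
    and ab: "a \<noteq> b" "a \<in> {1..k}" "b \<in> {1..k}" and unused: "a \<notin> range c" "b \<notin> range c"
    and uv: "(u, v) \<in> E"
  shows "nbhds_linked (kempe_edges V E k) c (recolourings_at V E k c u) (recolourings_at V E k c v)"
proof -
  let ?R = "recolourings_at V E k c"
  have "u \<in> V" "v \<in> V" "u \<noteq> v" using G uv unfolding simple_graph_def by auto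
  have "?R u \<in> triangle_nbhds (kempe_edges V E k) c" "?R v \<in> triangle_nbhds (kempe_edges V E k) c"
    using recolourings_at_mem_triangle_nbhds[OF G c _ ab unused] \<open>u \<in> V\<close> \<open>v \<in> V\<close> by auto
  moreover have d: "c(u := a) \<in> ?R u" and e: "c(v := a) \<in> ?R v"
    using recolour_with_unused_colour[OF c _ ab(2) unused(1)] \<open>u \<in> V\<close> \<open>v \<in> V\<close> by auto
  moreover have "?R u \<noteq> ?R v"
    using d recolourings_at_unique \<open>u \<noteq> v\<close> by metis
  moreover have "\<forall>f. triangle_edge (kempe_edges V E k) (c(u := a)) f
      \<and> triangle_edge (kempe_edges V E k) (c(v := a)) f \<longrightarrow> f = c"
    using kempe_common_triangle_nbr_eq[OF G uv unused(1)] by blast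
  ultimately show ?thesis unfolding nbhds_linked_def by blast
qed

section \<open>Recovering the graph\<close>

definition subgraph_embeddable :: "'a set \<Rightarrow> ('a \<times> 'a) set \<Rightarrow> 'b set \<Rightarrow> ('b \<times> 'b) set \<Rightarrow> bool" where
  "subgraph_embeddable V E V' E' \<longleftrightarrow>
     (\<exists>g. g ` V \<subseteq> V' \<and> inj_on g V \<and> (\<forall>u\<in>V. \<forall>v\<in>V. (u, v) \<in> E \<longrightarrow> (g u, g v) \<in> E'))"

lemma kempe_graph_iso_imp_subgraph_embeddable:
  assumes G: "simple_graph V E" and G': "simple_graph V' E'"
    and k: "chromatic_number V E + 1 < k"
    and iso: "graph_iso (colourings V E k) (kempe_edges V E k)
      (colourings V' E' k') (kempe_edges V' E' k')"
  shows "subgraph_embeddable V E V' E'"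
proof -
  let ?W = "colourings V E k" and ?F = "kempe_edges V E k" and ?R = "recolourings_at V E k"
  let ?W' = "colourings V' E' k'" and ?F' = "kempe_edges V' E' k'"
    and ?R' = "recolourings_at V' E' k'"
  obtain \<phi> where "graph_isomorphism ?W ?F ?W' ?F' \<phi>"
    using graph_iso_imp_graph_isomorphism[OF iso] unfolding kempe_edges_def by blast
  then interpret graph_isomorphism ?W ?F ?W' ?F' \<phi> .
  obtain c a b where c: "c \<in> ?W" and ab: "a \<noteq> b" "a \<in> {1..k}" "b \<in> {1..k}"
    and unused: "a \<notin> range c" "b \<notin> range c"
    by (rule colouring_with_two_unused_colours[OF G k])
  have "\<forall>v\<in>V. \<exists>v'. v' \<in> V' \<and> \<phi> ` ?R c v = ?R' (\<phi> c) v'"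
  proof
    fix v assume "v \<in> V"
    have "\<phi> ` ?R c v \<in> triangle_nbhds ?F' (\<phi> c)"
      using recolourings_at_mem_triangle_nbhds[OF G c \<open>v \<in> V\<close> ab unused]
      by (rule triangle_nbhds_image[OF c])
    then show "\<exists>v'. v' \<in> V' \<and> \<phi> ` ?R c v = ?R' (\<phi> c) v'"
      using kempe_triangle_nbhds[OF G'] by metis
  qed
  from bchoice[OF this] obtain g where "\<forall>v\<in>V. g v \<in> V' \<and> \<phi> ` ?R c v = ?R' (\<phi> c) (g v)"
    by blast
  then have gV: "g ` V \<subseteq> V'" and g: "\<And>v. v \<in> V \<Longrightarrow> \<phi> ` ?R c v = ?R' (\<phi> c) (g v)"
    by auto
  have "inj_on g V"
  proof (rule inj_onI)
    fix u v assume u: "u \<in> V" and v: "v \<in> V" and "g u = g v"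
    then have "\<phi> ` ?R c u = \<phi> ` ?R c v" using g by simp
    moreover have "?R c u \<subseteq> ?W" "?R c v \<subseteq> ?W" unfolding recolourings_at_def by auto
    ultimately have "?R c u = ?R c v" using image_eq_iff by blast
    then show "u = v" using inj_onD[OF recolourings_at_inj_on[OF c ab(2) unused(1)] _ u v] by blast
  qed
  moreover have "(g u, g v) \<in> E'" if "u \<in> V" "v \<in> V" "(u, v) \<in> E" for u v
  proof -
    have "nbhds_linked ?F c (?R c u) (?R c v)"
      using kempe_edge_imp_nbhds_linked[OF G c ab unused that(3)] .
    then have "nbhds_linked ?F' (\<phi> c) (?R' (\<phi> c) (g u)) (?R' (\<phi> c) (g v))"
      using nbhds_linked_image[OF c] g that(1,2) by metis
    then show ?thesis by (rule kempe_nbhds_linked_imp_edge[OF G'])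
  qed
  ultimately show ?thesis unfolding subgraph_embeddable_def using gV by blast
qed

lemma graph_iso_sym:
  assumes "graph_iso V E V' E'"
  shows "graph_iso V' E' V E"
proof -
  obtain f where bij: "bij_betw f V V'" and edges: "\<forall>u\<in>V. \<forall>v\<in>V. (u, v) \<in> E \<longleftrightarrow> (f u, f v) \<in> E'"
    using assms unfolding graph_iso_def by blast
  let ?g = "inv_into V f"
  have "(u, v) \<in> E' \<longleftrightarrow> (?g u, ?g v) \<in> E" if "u \<in> V'" "v \<in> V'" for u v
  proof -
    have "?g u \<in> V" "?g v \<in> V"
      using bij_betw_apply[OF bij_betw_inv_into[OF bij]] that by auto
    moreover have "f (?g u) = u" "f (?g v) = v"
      using bij_betw_inv_into_right[OF bij] that by auto
    ultimately show ?thesis using edges by force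
  qed
  then show ?thesis unfolding graph_iso_def using bij_betw_inv_into[OF bij] by blast
qed

lemma image_eq_if_injections_both_ways:
  assumes "finite B" and f: "inj_on f A" "f ` A \<subseteq> B" and h: "inj_on h B" "h ` B \<subseteq> A"
  shows "f ` A = B"
proof -
  have "finite A" using inj_on_finite[OF f \<open>finite B\<close>] .
  then have "card (f ` A) = card B"
    using card_bij_eq[OF f h] \<open>finite B\<close> card_image[OF f(1)] by simp
  then show ?thesis using card_subset_eq[OF \<open>finite B\<close> f(2)] by blast
qed

lemma subgraph_embeddable_antisym:
  assumes V: "finite V" and V': "finite V'" and E: "E \<subseteq> V \<times> V" and E': "E' \<subseteq> V' \<times> V'"
    and GG': "subgraph_embeddable V E V' E'" and G'G: "subgraph_embeddable V' E' V E"
  shows "graph_iso V E V' E'"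
proof -
  obtain g where gV: "g ` V \<subseteq> V'" and g_inj: "inj_on g V"
    and g_hom: "\<forall>u\<in>V. \<forall>v\<in>V. (u, v) \<in> E \<longrightarrow> (g u, g v) \<in> E'"
    using GG' unfolding subgraph_embeddable_def by blast
  obtain h where hV: "h ` V' \<subseteq> V" and h_inj: "inj_on h V'"
    and h_hom: "\<forall>u\<in>V'. \<forall>v\<in>V'. (u, v) \<in> E' \<longrightarrow> (h u, h v) \<in> E"
    using G'G unfolding subgraph_embeddable_def by blast
  have "bij_betw g V V'"
    unfolding bij_betw_def
    using image_eq_if_injections_both_ways[OF V' g_inj gV h_inj hV] g_inj by blast
  moreover have "map_prod g g ` E = E'"
  proof (rule image_eq_if_injections_both_ways)
    show "finite E'" using E' V' by (meson finite_SigmaI finite_subset)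
    show "inj_on (map_prod g g) E" using map_prod_inj_on[OF g_inj g_inj] E by (rule inj_on_subset)
    show "map_prod g g ` E \<subseteq> E'" using g_hom E by auto
    show "inj_on (map_prod h h) E'" using map_prod_inj_on[OF h_inj h_inj] E' by (rule inj_on_subset)
    show "map_prod h h ` E' \<subseteq> E" using h_hom E' by auto
  qed
  have "(u, v) \<in> E" if u: "u \<in> V" and v: "v \<in> V" and uv: "(g u, g v) \<in> E'" for u v
  proof -
    obtain p q where pq: "(p, q) \<in> E" "g p = g u" "g q = g v"
      using uv \<open>map_prod g g ` E = E'\<close> by force
    then have "p = u" "q = v" using inj_onD[OF g_inj] E u v by auto
    then show ?thesis using pq(1) by simp
  qed
  ultimately show ?thesis unfolding graph_iso_def using g_hom by blast
qed

theorem theorem1p5: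
  fixes V :: "'a set" and E :: "('a \<times> 'a) set"
    and V' :: "'b set" and E' :: "('b \<times> 'b) set"
    and k k' :: nat
  assumes "simple_graph V E" and "simple_graph V' E'"
    and "k > chromatic_number V E + 1"
    and "k' > chromatic_number V' E' + 1"
    and "graph_iso (colourings V E k) (kempe_edges V E k) (colourings V' E' k') (kempe_edges V' E' k')"
  shows "graph_iso V E V' E'"
proof -
  have "subgraph_embeddable V E V' E'"
    using kempe_graph_iso_imp_subgraph_embeddable[OF assms(1,2,3,5)] .
  moreover have "subgraph_embeddable V' E' V E"
    using kempe_graph_iso_imp_subgraph_embeddable[OF assms(2,1,4) graph_iso_sym[OF assms(5)]] .
  moreover have "finite V" "E \<subseteq> V \<times> V" "finite V'" "E' \<subseteq> V' \<times> V'"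
    using assms(1,2) unfolding simple_graph_def by auto
  ultimately show ?thesis
    using subgraph_embeddable_antisym by blast
qed

end
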